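(* Let $p,\mu\in(1,\infty)$, let $\eta:[0,\infty)\to[0,1]$ be continuous, and set $$\omega(t):=\eta(t)(1+t)^{-\mu}+(1-\eta(t))(1+t)^{p-2},\quad t\ge0,\qquad G(\xi):=\int_0^{|\xi|}\int_0^s\omega(r)\,\mathrm{d}r\,\mathrm{d}s,\quad\xi\in\mathbb{R}^2.$$ Then there are constants $c_5,c_6>0$ such that $$c_5(1+|\xi|)^{-\mu}|\zeta|^2\le D^2G(\xi)(\zeta,\zeta)\le c_6(1+|\xi|)^{p-2}|\zeta|^2\quad\text{for all }\xi,\zeta\in\mathbb{R}^2.$$ *)

theory Defs
  imports "HOL-Analysis.Analysis"
begin

definition omega :: "real \<Rightarrow> real \<Rightarrow> (real \<Rightarrow> real) \<Rightarrow> real \<Rightarrow> real" where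
  "omega p mu eta t = eta t * (1 + t) powr (- mu) + (1 - eta t) * (1 + t) powr (p - 2)"

definition Gfun :: "real \<Rightarrow> real \<Rightarrow> (real \<Rightarrow> real) \<Rightarrow> real ^ 2 \<Rightarrow> real" where
  "Gfun p mu eta xi =
     integral {0..norm xi} (\<lambda>s. integral {0..s} (\<lambda>r. omega p mu eta r))"

end

theory Submission
  imports Defs
begin

text \<open>
  With \<open>prim1\<close> and \<open>prim2\<close> the first and second antiderivatives of \<open>\<omega>\<close> from 0, one has
  \<open>G \<xi> = prim2 \<bar>\<xi>\<bar>\<close>. Writing \<open>mean t = prim1 t / t\<close> for the average of \<open>\<omega>\<close> on \<open>[0, t]\<close>,
  the gradient is \<open>mean \<bar>\<xi>\<bar> \<xi>\<close>, and the Hessian quadratic form is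
  \<open>D\<^sup>2G \<xi> (\<zeta>, \<zeta>) = mean \<bar>\<xi>\<bar> (\<bar>\<zeta>\<bar>\<^sup>2 - s) + \<omega> \<bar>\<xi>\<bar> s\<close> with \<open>s = (\<xi> \<bullet> \<zeta>)\<^sup>2 / \<bar>\<xi>\<bar>\<^sup>2 \<in> [0, \<bar>\<zeta>\<bar>\<^sup>2]\<close>,
  a convex combination of the tangential and radial second derivatives. Hence it suffices
  that \<open>\<omega>\<close> and its running mean both lie between \<open>(1 + t) powr (- \<mu>)\<close> and a multiple of
  \<open>(1 + t) powr (p - 2)\<close>. For \<open>\<omega>\<close> this is convexity in \<open>\<eta>\<close>; the mean inherits the lower
  bound because \<open>(1 + t) powr (- \<mu>)\<close> decreases, and the upper bound for \<open>p < 2\<close> and \<open>t > 1\<close>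
  comes from \<open>prim1 t \<le> (1 + t) powr (p - 1) / (p - 1)\<close>.
\<close>

lemma tendsto_norm_quotient_at_0:
  fixes \<phi> :: "real \<Rightarrow> real"
  assumes "(\<phi> has_real_derivative d) (at 0 within {0..b})" "b > 0" "\<phi> 0 = 0"
  shows "((\<lambda>y::'a::real_normed_vector. \<phi> (norm y) / norm y) \<longlongrightarrow> d) (at 0)"
proof -
  have "((\<lambda>t. \<phi> t / t) \<longlongrightarrow> d) (at 0 within {0..b})"
    using assms(1,3) unfolding has_field_derivative_iff by simp
  moreover have "filterlim (\<lambda>y::'a. norm y) (at 0 within {0..b}) (at 0)"
    unfolding filterlim_at
  proof
    show "eventually (\<lambda>y::'a. norm y \<in> {0..b} \<and> norm y \<noteq> 0) (at 0)"
      using assms(2) by (auto simp: eventually_at intro!: exI[of _ b])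
    show "((\<lambda>y::'a. norm y) \<longlongrightarrow> 0) (at 0)"
      using tendsto_norm[OF tendsto_ident_at, of "0::'a" UNIV] by simp
  qed
  ultimately show ?thesis
    by (rule filterlim_compose)
qed

lemma has_derivative_scaleR_bounded_linear_at_0:
  fixes f :: "'a::real_normed_vector \<Rightarrow> real" and L :: "'a \<Rightarrow> 'b::real_normed_vector"
  assumes f: "(f \<longlongrightarrow> f 0) (at 0)" and L: "bounded_linear L"
  shows "((\<lambda>y. f y *\<^sub>R L y) has_derivative (\<lambda>v. f 0 *\<^sub>R L v)) (at 0)"
proof -
  obtain K where K: "\<And>x. norm (L x) \<le> norm x * K"
    using bounded_linear.bounded[OF L] by blast
  have L0: "L 0 = 0"
    using L by (simp add: linear_simps)
  have remainder_le: "norm ((f y *\<^sub>R L y - f 0 *\<^sub>R L 0 - f 0 *\<^sub>R L (y - 0)) /\<^sub>R norm (y - 0))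
                        \<le> norm (f y - f 0) * K" for y
  proof (cases "y = 0")
    case True
    then show ?thesis using L0 K[of 0] by simp
  next
    case False
    have "norm ((f y *\<^sub>R L y - f 0 *\<^sub>R L 0 - f 0 *\<^sub>R L (y - 0)) /\<^sub>R norm (y - 0))
          = \<bar>f y - f 0\<bar> * (norm (L y) / norm y)"
      using L0 by (simp add: scaleR_diff_left[symmetric] divide_simps)
    also have "\<dots> \<le> \<bar>f y - f 0\<bar> * K"
      using K[of y] False by (intro mult_left_mono) (auto simp: divide_simps mult.commute)
    finally show ?thesis by simp
  qed
  have "((\<lambda>y. f y - f 0) \<longlongrightarrow> 0) (at 0)"
    using f by (simp add: LIM_zero)
  then show ?thesis
    unfolding has_derivative_at_within
    using bounded_linear_compose[OF bounded_linear_scaleR_right L] remainder_le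
    by (auto intro: tendsto_0_le[where K = K] always_eventually)
qed

lemma quadratic_form_convex_combination_bounds:
  fixes x z :: "'a::real_inner"
  assumes "lo \<le> a" "a \<le> hi" "lo \<le> b" "b \<le> hi"
  defines "q \<equiv> a * (norm z)\<^sup>2 + (b - a) * (x \<bullet> z)\<^sup>2 / (norm x)\<^sup>2"
  shows "lo * (norm z)\<^sup>2 \<le> q \<and> q \<le> hi * (norm z)\<^sup>2"
proof -
  define s where "s = (x \<bullet> z)\<^sup>2 / (norm x)\<^sup>2"
  have "s \<le> (norm z)\<^sup>2"
  proof (cases "x = 0")
    case False
    have "(x \<bullet> z)\<^sup>2 \<le> (norm x)\<^sup>2 * (norm z)\<^sup>2"
      using Cauchy_Schwarz_ineq[of x z] by (simp add: power2_norm_eq_inner)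
    then show ?thesis
      using False by (simp add: s_def divide_simps mult.commute)
  qed (simp add: s_def)
  moreover have "0 \<le> s"
    by (simp add: s_def)
  moreover have "q = a * ((norm z)\<^sup>2 - s) + b * s"
    unfolding q_def s_def times_divide_eq_right[symmetric] by argo
  ultimately show ?thesis
    using assms(1-4) mult_right_mono[of lo a "(norm z)\<^sup>2 - s"] mult_right_mono[of a hi "(norm z)\<^sup>2 - s"]
      mult_right_mono[of lo b s] mult_right_mono[of b hi s]
    by (simp add: algebra_simps)
qed

lemma has_real_derivative_at_of_within_Icc:
  assumes "(f has_real_derivative D) (at t within {a..b})" "a < t" "t < b"
  shows "(f has_real_derivative D) (at t)"
  using assms by (simp add: at_within_Icc_at)

locale radial_profile =
  fixes w :: "real \<Rightarrow> real"
  assumes continuous_w: "continuous_on {0..} w"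
begin

definition prim1 :: "real \<Rightarrow> real" where
  "prim1 t = integral {0..t} w"

definition prim2 :: "real \<Rightarrow> real" where
  "prim2 t = integral {0..t} prim1"

text \<open>The value \<open>w 0\<close> at \<open>t = 0\<close> is the continuous extension of \<open>prim1 t / t\<close>.\<close>
definition mean :: "real \<Rightarrow> real" where
  "mean t = (if t = 0 then w 0 else prim1 t / t)"

definition radial_grad :: "'a::real_inner \<Rightarrow> 'a \<Rightarrow>\<^sub>L real" where
  "radial_grad x = mean (norm x) *\<^sub>R blinfun_inner_left x"

text \<open>At \<open>x = 0\<close> the second summand vanishes, as \<open>(x \<bullet> z) / (norm x)\<^sup>2 = 0\<close> there.\<close>
definition radial_hess :: "'a::real_inner \<Rightarrow> 'a \<Rightarrow>\<^sub>L 'a \<Rightarrow>\<^sub>L real" where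
  "radial_hess x = Blinfun (\<lambda>z. mean (norm x) *\<^sub>R blinfun_inner_left z
     + ((w (norm x) - mean (norm x)) / (norm x)\<^sup>2 * (x \<bullet> z)) *\<^sub>R blinfun_inner_left x)"

lemma continuous_on_w_Icc: "continuous_on {0..b} w"
  using continuous_w by (rule continuous_on_subset) auto

lemma integrable_w_Icc: "w integrable_on {0..b}"
  by (rule integrable_continuous_interval[OF continuous_on_w_Icc])

lemma prim1_has_real_derivative_within:
  assumes "0 \<le> t" "t \<le> b"
  shows "(prim1 has_real_derivative w t) (at t within {0..b})"
  using integral_has_vector_derivative[OF continuous_on_w_Icc, of t] assms
  by (auto simp: prim1_def[abs_def] has_real_derivative_iff_has_vector_derivative)

lemma continuous_on_prim1_Icc: "continuous_on {0..b} prim1"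
  unfolding prim1_def[abs_def]
  by (rule indefinite_integral_continuous_1 integrable_w_Icc)+

lemma prim2_has_real_derivative_within:
  assumes "0 \<le> t" "t \<le> b"
  shows "(prim2 has_real_derivative prim1 t) (at t within {0..b})"
  using integral_has_vector_derivative[OF continuous_on_prim1_Icc, of t] assms
  by (auto simp: prim2_def[abs_def] has_real_derivative_iff_has_vector_derivative)

lemma prim1_0 [simp]: "prim1 0 = 0" and prim2_0 [simp]: "prim2 0 = 0"
  by (simp_all add: prim1_def prim2_def)

lemma mean_has_real_derivative:
  assumes "0 < t"
  shows "(mean has_real_derivative (w t - mean t) / t) (at t)"
proof -
  have "(prim1 has_real_derivative w t) (at t)"
    using prim1_has_real_derivative_within[of t "t + 1"] assms
    by (intro has_real_derivative_at_of_within_Icc) auto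
  then have "((\<lambda>s. prim1 s / s) has_real_derivative (w t * t - prim1 t * 1) / (t * t)) (at t)"
    using assms by (intro DERIV_divide DERIV_ident) auto
  then have "((\<lambda>s. prim1 s / s) has_real_derivative (w t - mean t) / t) (at t)"
    using assms by (simp add: mean_def field_simps)
  then show ?thesis
    by (rule has_field_derivative_transform_within_open[where S = "{0<..}"])
       (use assms in \<open>auto simp: mean_def\<close>)
qed

lemma tendsto_mean_norm_at_0: "((\<lambda>y::'a::real_inner. mean (norm y)) \<longlongrightarrow> mean 0) (at 0)"
proof -
  have "((\<lambda>y::'a. prim1 (norm y) / norm y) \<longlongrightarrow> w 0) (at 0)"
    by (rule tendsto_norm_quotient_at_0[OF prim1_has_real_derivative_within[of 0 1]]) auto
  moreover have "eventually (\<lambda>y::'a. prim1 (norm y) / norm y = mean (norm y)) (at 0)"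
    by (auto simp: eventually_at mean_def intro!: exI[of _ 1])
  ultimately show ?thesis
    by (simp add: tendsto_cong mean_def)
qed

lemma radial_has_derivative:
  fixes x :: "'a::real_inner"
  shows "((\<lambda>y. prim2 (norm y)) has_derivative blinfun_apply (radial_grad x)) (at x)"
proof (cases "x = 0")
  case False
  have "(prim2 has_real_derivative prim1 (norm x)) (at (norm x))"
    using prim2_has_real_derivative_within[of "norm x" "norm x + 1"] False
    by (intro has_real_derivative_at_of_within_Icc) auto
  from has_derivative_compose[OF has_derivative_norm[OF False]
         has_field_derivative_imp_has_derivative[OF this]]
  show ?thesis
    by (rule has_derivative_eq_rhs)
       (use False in \<open>auto simp: radial_grad_def mean_def sgn_div_norm
          scaleR_blinfun.rep_eq field_simps\<close>)
next
  case True
  have "((\<lambda>y::'a. prim2 (norm y) / norm y) \<longlongrightarrow> 0) (at 0)"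
    using tendsto_norm_quotient_at_0[OF prim2_has_real_derivative_within[of 0 1]] by simp
  then show ?thesis
    unfolding True has_derivative_at_within
    by (simp add: radial_grad_def divide_inverse mult.commute scaleR_blinfun.rep_eq)
qed

lemma radial_hess_apply:
  "radial_hess x z y = mean (norm x) * (z \<bullet> y)
     + (w (norm x) - mean (norm x)) * (x \<bullet> z) * (x \<bullet> y) / (norm x)\<^sup>2"
proof -
  have "bounded_linear (\<lambda>z. mean (norm x) *\<^sub>R blinfun_inner_left z
     + ((w (norm x) - mean (norm x)) / (norm x)\<^sup>2 * (x \<bullet> z)) *\<^sub>R blinfun_inner_left x)"
    by (intro bounded_linear_add
          bounded_linear_compose[OF bounded_linear_scaleR_right bounded_linear_blinfun_inner_left]
          bounded_linear_compose[OF bounded_linear_scaleR_left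
            bounded_linear_compose[OF bounded_linear_mult_right bounded_linear_inner_right]])
  then show ?thesis
    by (simp add: radial_hess_def bounded_linear_Blinfun_apply plus_blinfun.rep_eq
        scaleR_blinfun.rep_eq inner_commute)
qed

lemma radial_grad_has_derivative:
  fixes x :: "'a::real_inner"
  shows "(radial_grad has_derivative blinfun_apply (radial_hess x)) (at x)"
proof (cases "x = 0")
  case False
  then have "norm x > 0" by simp
  have "((\<lambda>y. mean (norm y)) has_derivative
          (\<lambda>v. (w (norm x) - mean (norm x)) / norm x * (v \<bullet> sgn x))) (at x)"
    using has_derivative_compose[OF has_derivative_norm[OF False]
        has_field_derivative_imp_has_derivative[OF mean_has_real_derivative[OF \<open>norm x > 0\<close>]]]
    by simp
  from has_derivative_scaleR[OF this
        bounded_linear_imp_has_derivative[OF bounded_linear_blinfun_inner_left]]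
  show ?thesis
    unfolding radial_grad_def[abs_def]
    by (rule has_derivative_eq_rhs)
       (use False in \<open>auto intro!: blinfun_eqI simp: radial_hess_apply sgn_div_norm
          plus_blinfun.rep_eq scaleR_blinfun.rep_eq power2_eq_square inner_commute field_simps\<close>)
next
  case True
  have "((\<lambda>y::'a. mean (norm y) *\<^sub>R blinfun_inner_left y)
          has_derivative (\<lambda>v. mean 0 *\<^sub>R blinfun_inner_left v)) (at 0)"
    using has_derivative_scaleR_bounded_linear_at_0[of "\<lambda>y. mean (norm y)" blinfun_inner_left]
      tendsto_mean_norm_at_0 bounded_linear_blinfun_inner_left
    by simp
  then show ?thesis
    unfolding radial_grad_def[abs_def] True
    by (rule has_derivative_eq_rhs)
       (auto intro!: blinfun_eqI simp: radial_hess_apply scaleR_blinfun.rep_eq inner_commute)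
qed

lemma prim1_le_has_integral:
  assumes "(f has_integral I) {0..t}" "\<And>r. r \<in> {0..t} \<Longrightarrow> w r \<le> f r"
  shows "prim1 t \<le> I"
  unfolding prim1_def
  by (rule has_integral_le[OF integrable_integral[OF integrable_w_Icc] assms])

lemma prim1_ge_has_integral:
  assumes "(f has_integral I) {0..t}" "\<And>r. r \<in> {0..t} \<Longrightarrow> f r \<le> w r"
  shows "I \<le> prim1 t"
  unfolding prim1_def
  by (rule has_integral_le[OF assms(1) integrable_integral[OF integrable_w_Icc] assms(2)])

lemma mean_le_const:
  assumes "0 \<le> t" "\<And>r. r \<in> {0..t} \<Longrightarrow> w r \<le> c"
  shows "mean t \<le> c"
proof (cases "t = 0")
  case False
  have "prim1 t \<le> t * c"
    using prim1_le_has_integral[OF has_integral_const_real[of c 0 t] assms(2)] assms(1) by simp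
  then show ?thesis
    using False assms(1) by (simp add: mean_def divide_simps mult.commute)
qed (use assms in \<open>simp add: mean_def\<close>)

lemma mean_ge_const:
  assumes "0 \<le> t" "\<And>r. r \<in> {0..t} \<Longrightarrow> c \<le> w r"
  shows "c \<le> mean t"
proof (cases "t = 0")
  case False
  have "t * c \<le> prim1 t"
    using prim1_ge_has_integral[OF has_integral_const_real[of c 0 t] assms(2)] assms(1) by simp
  then show ?thesis
    using False assms(1) by (simp add: mean_def divide_simps mult.commute)
qed (use assms in \<open>simp add: mean_def\<close>)

lemma radial_hess_bounds:
  fixes x z :: "'a::real_inner"
  assumes "lo \<le> mean (norm x)" "mean (norm x) \<le> hi" "lo \<le> w (norm x)" "w (norm x) \<le> hi"
  shows "lo * (norm z)\<^sup>2 \<le> radial_hess x z z \<and> radial_hess x z z \<le> hi * (norm z)\<^sup>2"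
  using quadratic_form_convex_combination_bounds[OF assms, of z x]
  by (simp add: radial_hess_apply power2_eq_square dot_square_norm)

end

lemma has_integral_one_plus_powr:
  fixes a t :: real
  assumes "a \<noteq> -1" "0 \<le> t"
  shows "((\<lambda>r. (1 + r) powr a) has_integral ((1 + t) powr (a + 1) - 1) / (a + 1)) {0..t}"
proof -
  have "((\<lambda>r. (1 + r) powr (a + 1) / (a + 1)) has_real_derivative (1 + r) powr a) (at r)"
    if "r \<in> {0..t}" for r
  proof -
    have "((\<lambda>r. (1 + r) powr (a + 1) / (a + 1)) has_real_derivative
            (a + 1) * (1 + r) powr (a + 1 - 1) * (0 + 1) / (a + 1)) (at r)"
      using that by (intro DERIV_cdivide DERIV_chain2[OF has_real_derivative_powr] derivative_intros) auto
    then show ?thesis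
      using assms(1) by simp
  qed
  from fundamental_theorem_of_calculus[OF assms(2), of "\<lambda>r. (1 + r) powr (a + 1) / (a + 1)"] this
  show ?thesis
    by (simp add: has_real_derivative_iff_has_vector_derivative[symmetric]
        has_field_derivative_at_within diff_divide_distrib)
qed

locale omega_weight =
  fixes p mu :: real and eta :: "real \<Rightarrow> real"
  assumes p_gt_1: "p > 1" and mu_gt_1: "mu > 1"
    and continuous_eta: "continuous_on {0..} eta"
    and eta_bounds: "\<And>t. t \<ge> 0 \<Longrightarrow> 0 \<le> eta t \<and> eta t \<le> 1"
begin

sublocale radial_profile "omega p mu eta"
  by unfold_locales (auto simp: omega_def intro!: continuous_intros continuous_eta)

lemma omega_bounds:
  assumes "t \<ge> 0"
  shows "(1 + t) powr (- mu) \<le> omega p mu eta t \<and> omega p mu eta t \<le> (1 + t) powr (p - 2)"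
proof -
  have "(1 + t) powr (- mu) \<le> (1 + t) powr (p - 2)"
    using assms p_gt_1 mu_gt_1 by (intro powr_mono) auto
  then show ?thesis
    using eta_bounds[OF assms]
      mult_left_mono[of "(1 + t) powr (- mu)" "(1 + t) powr (p - 2)" "eta t"]
      mult_left_mono[of "(1 + t) powr (- mu)" "(1 + t) powr (p - 2)" "1 - eta t"]
    by (auto simp: omega_def algebra_simps)
qed

lemma mean_ge_powr:
  assumes "t \<ge> 0"
  shows "(1 + t) powr (- mu) \<le> mean t"
proof (rule mean_ge_const[OF assms])
  fix r assume r: "r \<in> {0..t}"
  have "(1 + t) powr (- mu) \<le> (1 + r) powr (- mu)"
    using r mu_gt_1 by (intro powr_mono2') auto
  then show "(1 + t) powr (- mu) \<le> omega p mu eta r"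
    using omega_bounds[of r] r by auto
qed

lemma prim1_le_powr:
  assumes "t \<ge> 0"
  shows "prim1 t \<le> (1 + t) powr (p - 1) / (p - 1)"
proof -
  have "prim1 t \<le> ((1 + t) powr (p - 2 + 1) - 1) / (p - 2 + 1)"
    using p_gt_1 assms omega_bounds
    by (intro prim1_le_has_integral[OF has_integral_one_plus_powr]) auto
  also have "\<dots> \<le> (1 + t) powr (p - 1) / (p - 1)"
    using p_gt_1 by (simp add: divide_right_mono)
  finally show ?thesis .
qed

lemma mean_le_powr_of_ge_2:
  assumes "p \<ge> 2" "t \<ge> 0"
  shows "mean t \<le> (1 + t) powr (p - 2)"
proof (rule mean_le_const[OF assms(2)])
  fix r assume r: "r \<in> {0..t}"
  have "omega p mu eta r \<le> (1 + r) powr (p - 2)"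
    using omega_bounds r by auto
  also have "\<dots> \<le> (1 + t) powr (p - 2)"
    using r assms(1) by (intro powr_mono2) auto
  finally show "omega p mu eta r \<le> (1 + t) powr (p - 2)" .
qed

lemma mean_le_1_of_le_2:
  assumes "p \<le> 2" "t \<ge> 0"
  shows "mean t \<le> 1"
proof (rule mean_le_const[OF assms(2)])
  fix r assume r: "r \<in> {0..t}"
  have "omega p mu eta r \<le> (1 + r) powr (p - 2)"
    using omega_bounds r by auto
  also have "\<dots> \<le> (1 + r) powr 0"
    using r assms(1) by (intro powr_mono) auto
  finally show "omega p mu eta r \<le> 1"
    using r by simp
qed

lemma mean_le_powr_of_ge_1:
  assumes "t \<ge> 1"
  shows "mean t \<le> 2 / (p - 1) * (1 + t) powr (p - 2)"
proof -
  have "prim1 t \<le> (1 + t) * (1 + t) powr (p - 2) / (p - 1)"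
    using prim1_le_powr assms by (simp add: powr_add[symmetric] powr_mult_base)
  also have "\<dots> \<le> 2 * t * (1 + t) powr (p - 2) / (p - 1)"
    using assms p_gt_1 by (intro divide_right_mono mult_right_mono) auto
  also have "\<dots> = (2 / (p - 1) * (1 + t) powr (p - 2)) * t"
    by simp
  finally have "prim1 t / t \<le> 2 / (p - 1) * (1 + t) powr (p - 2)"
    using assms by (subst pos_divide_le_eq) auto
  then show ?thesis
    using assms by (simp add: mean_def)
qed

lemma mean_le_powr:
  assumes "t \<ge> 0"
  shows "mean t \<le> (2 + 2 / (p - 1)) * (1 + t) powr (p - 2)"
proof -
  have "1 / 2 \<le> (1 + t) powr (p - 2)" if "t \<le> 1"
  proof -
    have "(1 + t) powr (-1) \<le> (1 + t) powr (p - 2)"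
      using assms p_gt_1 by (intro powr_mono) auto
    moreover have "1 / 2 \<le> (1 + t) powr (-1)"
      using that assms by (simp add: powr_minus divide_simps)
    ultimately show ?thesis
      by linarith
  qed
  then have "mean t \<le> 2 * (1 + t) powr (p - 2) \<or> mean t \<le> 2 / (p - 1) * (1 + t) powr (p - 2)"
    using mean_le_powr_of_ge_2[OF _ assms] mean_le_1_of_le_2[OF _ assms] mean_le_powr_of_ge_1
      powr_ge_zero[of "1 + t" "p - 2"]
    by (cases "p \<ge> 2"; cases "t \<le> 1") force+
  moreover have "0 \<le> 2 / (p - 1) * (1 + t) powr (p - 2)"
    using p_gt_1 by simp
  ultimately show ?thesis
    unfolding distrib_right using powr_ge_zero[of "1 + t" "p - 2"] by linarith
qed

lemma Gfun_eq_prim2_norm: "Gfun p mu eta = (\<lambda>x. prim2 (norm x))"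
  by (simp add: fun_eq_iff Gfun_def prim2_def prim1_def[abs_def])

end

theorem proposition5p4:
  fixes p mu :: real and eta :: "real \<Rightarrow> real"
  assumes "p > 1" and "mu > 1"
    and "continuous_on {0..} eta"
    and "\<And>t. t \<ge> 0 \<Longrightarrow> 0 \<le> eta t \<and> eta t \<le> 1"
  shows "\<exists>c5 c6 (DG :: (real^2) \<Rightarrow> ((real^2) \<Rightarrow>\<^sub>L real))
              (D2G :: (real^2) \<Rightarrow> ((real^2) \<Rightarrow>\<^sub>L ((real^2) \<Rightarrow>\<^sub>L real))).
           c5 > 0 \<and> c6 > 0 \<and>
           (\<forall>x. (Gfun p mu eta has_derivative blinfun_apply (DG x)) (at x)) \<and>
           (\<forall>x. (DG has_derivative blinfun_apply (D2G x)) (at x)) \<and>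
           (\<forall>xi zeta.
              c5 * (1 + norm xi) powr (- mu) * (norm zeta)\<^sup>2 \<le> blinfun_apply (blinfun_apply (D2G xi) zeta) zeta \<and>
              blinfun_apply (blinfun_apply (D2G xi) zeta) zeta \<le> c6 * (1 + norm xi) powr (p - 2) * (norm zeta)\<^sup>2)"
proof -
  interpret omega_weight p mu eta
    using assms by unfold_locales auto
  define c6 where "c6 = 2 + 2 / (p - 1)"
  have "c6 > 0"
    using assms(1) by (simp add: c6_def add_pos_nonneg)
  moreover have "\<And>t. t \<ge> 0 \<Longrightarrow> omega p mu eta t \<le> c6 * (1 + t) powr (p - 2)"
    using omega_bounds assms(1) mult_right_mono[of 1 c6 "(1 + _) powr (p - 2)"]
    by (fastforce simp: c6_def intro: order_trans)
  then have "(1 + norm x) powr (- mu) * (norm z)\<^sup>2 \<le> radial_hess x z z \<and>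
             radial_hess x z z \<le> c6 * (1 + norm x) powr (p - 2) * (norm z)\<^sup>2" for x z :: "real^2"
    using mean_ge_powr mean_le_powr omega_bounds
    by (intro radial_hess_bounds) (auto simp: c6_def)
  ultimately show ?thesis
    using radial_has_derivative radial_grad_has_derivative
    by (intro exI[of _ 1] exI[of _ c6] exI[of _ radial_grad] exI[of _ radial_hess])
       (auto simp: Gfun_eq_prim2_norm)
qed

end
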